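(* Let $V\subset U\subset\mathcal{A}_0$, and suppose that for every continuous linear functional $\lambda$ on $\mathcal{A}$, with $\lambda:=g$, we have $g(0)\in\lambda(V)$. Then the following are equivalent: (a) $\lambda(U)=\lambda(V)$ for every continuous linear functional $\lambda$ on $\mathcal{A}$; (b) for every continuous linear functional $\lambda$ on $\mathcal{A}$, $0\notin\lambda(V)$ implies $0\notin\lambda(U)$; (c) $U^T=V^T$.
   Context: $D=\{z:|z|<1\}$, $\overline D$ its closure. $\mathcal{A}$ is the space of functions $f(z)=\sum_{k\ge0}a_k(f)z^k$ analytic in $D$, with the topology of locally uniform convergence; $\mathcal{A}_0=\{f\in\mathcal{A}: a_0(f)=1\}$. $\mathcal{A}(\overline D)$ is the set of functions analytic in some disk $\{|z|<R\}$ with $R>1$, and $\mathcal{A}_0(\overline D)=\{g\in\mathcal{A}(\overline D):a_0(g)=1\}$. The Hadamard product is $(f*g)(z)=\sum_{k\ge0}a_k(f)a_k(g)z^k$. Every continuous linear functional $\lambda$ on $\mathcal{A}$ has the form $\lambda(f)=(f*g)(1)$ for a function $g\in\mathcal{A}(\overline D)$; this is written $\lambda:=g$. For $V\subset\mathcal{A}_0$, $V^T=\{g\in\mathcal{A}_0(\overline D): (f*g)(1)\ne0 \ \forall f\in V\}$. *)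

theory Defs
  imports "HOL-Analysis.Analysis"
begin

definition acoeff :: "nat \<Rightarrow> (complex \<Rightarrow> complex) \<Rightarrow> complex" where
  "acoeff k f = (deriv ^^ k) f 0 / of_nat (fact k)"

definition A_space :: "(complex \<Rightarrow> complex) set" where
  "A_space = {f. f holomorphic_on ball 0 1}"

definition A0 :: "(complex \<Rightarrow> complex) set" where
  "A0 = {f \<in> A_space. acoeff 0 f = 1}"

definition A_closed :: "(complex \<Rightarrow> complex) set" where
  "A_closed = {g. \<exists>R>1. g holomorphic_on ball 0 R}"

definition A0_closed :: "(complex \<Rightarrow> complex) set" where
  "A0_closed = {g \<in> A_closed. acoeff 0 g = 1}"

text \<open>Hadamard product evaluated at 1, i.e. the continuous linear functional
  lambda := g applied to f: (f * g)(1) = sum_k a_k(f) a_k(g).\<close>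
definition hadamard_at1 :: "(complex \<Rightarrow> complex) \<Rightarrow> (complex \<Rightarrow> complex) \<Rightarrow> complex" where
  "hadamard_at1 f g = (\<Sum>k. acoeff k f * acoeff k g)"

definition lam :: "(complex \<Rightarrow> complex) \<Rightarrow> (complex \<Rightarrow> complex) \<Rightarrow> complex" where
  "lam g f = hadamard_at1 f g"

definition T_dual :: "(complex \<Rightarrow> complex) set \<Rightarrow> (complex \<Rightarrow> complex) set" where
  "T_dual V = {g \<in> A0_closed. \<forall>f\<in>V. hadamard_at1 f g \<noteq> 0}"

end

theory Submission
  imports Defs "HOL-Complex_Analysis.Complex_Analysis"
begin

text \<open>
  For \<open>f \<in> A0\<close> the value \<open>lam g f\<close> depends affinely on the constant term of \<open>g\<close>:
  \<open>lam (g - w) f = lam g f - w\<close>. Hence a value \<open>w \<in> lam g ` U\<close> missed by \<open>lam g ` V\<close>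
  is a zero of \<open>lam (g - w)\<close> on \<open>U\<close> but not on \<open>V\<close>, which gives (b) \<open>\<Longrightarrow>\<close> (a).
  Conversely, if \<open>0 \<notin> lam g ` V\<close> then \<open>g 0 \<noteq> 0\<close> by hypothesis, so \<open>g / g 0\<close> lies in
  \<open>A0_closed\<close> and has the same zeros; thus zero-freeness on \<open>V\<close> is membership in
  \<open>T_dual V\<close>, which gives (c) \<open>\<Longrightarrow>\<close> (b).
\<close>

lemma acoeff_0 [simp]: "acoeff 0 g = g 0"
  by (simp add: acoeff_def)

lemma A_closed_analytic_at_0:
  assumes "g \<in> A_closed"
  shows "g analytic_on {0}"
proof -
  obtain R where "R > 1" "g holomorphic_on ball 0 R"
    using assms by (auto simp: A_closed_def)
  then have "g analytic_on ball 0 R"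
    by (simp add: analytic_on_open)
  then show ?thesis
    by (rule analytic_on_subset) (use \<open>R > 1\<close> in auto)
qed

lemma A_closed_diff_const: "g \<in> A_closed \<Longrightarrow> (\<lambda>z. g z - c) \<in> A_closed"
  by (auto simp: A_closed_def intro!: holomorphic_intros)

lemma A_closed_cmult: "g \<in> A_closed \<Longrightarrow> (\<lambda>z. c * g z) \<in> A_closed"
  by (auto simp: A_closed_def intro!: holomorphic_intros)

lemma acoeff_diff_const:
  assumes "g analytic_on {0}"
  shows "acoeff k (\<lambda>z. g z - c) = acoeff k g - (if k = 0 then c else 0)"
proof -
  have "(deriv ^^ k) (\<lambda>z. g z - c) 0 = (deriv ^^ k) g 0 - (deriv ^^ k) (\<lambda>z. c) 0"
    using assms by (intro higher_deriv_diff_at) auto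
  then show ?thesis
    by (simp add: acoeff_def diff_divide_distrib)
qed

lemma acoeff_cmult:
  assumes "g analytic_on {0}"
  shows "acoeff k (\<lambda>z. c * g z) = c * acoeff k g"
  using higher_deriv_cmult'[OF assms] by (simp add: acoeff_def)

lemma summable_acoeff_mult_power:
  assumes "f holomorphic_on ball 0 R" "norm z < R"
  shows "summable (\<lambda>n. acoeff n f * z ^ n)"
  using holomorphic_power_series[OF assms(1), of z] assms(2)
  by (auto simp: acoeff_def dest: sums_summable)

text \<open>With \<open>1 < s < R\<close> and \<open>r = 1/s\<close>, write \<open>a\<^sub>k(f) a\<^sub>k(g) = (a\<^sub>k(f) r\<^sup>k) (a\<^sub>k(g) s\<^sup>k)\<close>:
  the first factor is absolutely summable and the second is bounded.\<close>

lemma summable_hadamard: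
  assumes f: "f \<in> A_space" and g: "g \<in> A_closed"
  shows "summable (\<lambda>k. acoeff k f * acoeff k g)"
proof -
  obtain R where R: "R > 1" "g holomorphic_on ball 0 R"
    using g by (auto simp: A_closed_def)
  define s :: real where "s = (1 + R) / 2"
  define r :: real where "r = 1 / s"
  have s: "1 < s" "s < R" and r: "0 < r" "r < 1" "r * s = 1"
    using R by (auto simp: s_def r_def)
  have "summable (\<lambda>n. acoeff n g * of_real s ^ n)"
    using s by (intro summable_acoeff_mult_power[OF R(2)]) auto
  then have "Bseq (\<lambda>n. acoeff n g * of_real s ^ n)"
    by (rule summable_imp_Bseq)
  then obtain K where K: "\<And>n. norm (acoeff n g * of_real s ^ n) \<le> K"
    unfolding Bseq_def by blast
  obtain t :: real where t: "r < t" "t < 1"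
    using r dense by blast
  have "summable (\<lambda>n. acoeff n f * of_real t ^ n)"
    using f r t by (intro summable_acoeff_mult_power[of f 1]) (auto simp: A_space_def)
  then have abs_f: "summable (\<lambda>n. norm (acoeff n f * of_real r ^ n))"
    by (rule powser_insidea) (use r t in auto)
  show ?thesis
  proof (rule summable_comparison_test')
    show "summable (\<lambda>n. norm (acoeff n f * of_real r ^ n) * K)"
      using abs_f by (rule summable_mult2)
  next
    fix n
    have "of_real r ^ n * of_real s ^ n = (1 :: complex)"
      by (metis of_real_1 of_real_mult power_mult_distrib power_one r(3))
    then have "acoeff n f * acoeff n g = (acoeff n f * of_real r ^ n) * (acoeff n g * of_real s ^ n)"
      by (simp add: algebra_simps)
    then have "norm (acoeff n f * acoeff n g)
        = norm (acoeff n f * of_real r ^ n) * norm (acoeff n g * of_real s ^ n)"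
      by (simp only: norm_mult)
    also have "\<dots> \<le> norm (acoeff n f * of_real r ^ n) * K"
      by (rule mult_left_mono[OF K norm_ge_zero])
    finally show "norm (acoeff n f * acoeff n g) \<le> norm (acoeff n f * of_real r ^ n) * K" .
  qed
qed

lemma lam_diff_const:
  assumes f: "f \<in> A_space" and g: "g \<in> A_closed"
  shows "lam (\<lambda>z. g z - c) f = lam g f - c * f 0"
proof -
  have "(\<lambda>k. acoeff k f * acoeff k g) sums lam g f"
    using summable_hadamard[OF f g] by (simp add: lam_def hadamard_at1_def summable_sums)
  moreover have "(\<lambda>k. if k = 0 then c * f 0 else 0) sums (c * f 0)"
    by (rule sums_single)
  ultimately have "(\<lambda>k. acoeff k f * acoeff k g - (if k = 0 then c * f 0 else 0))
      sums (lam g f - c * f 0)"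
    by (rule sums_diff)
  then show ?thesis
    by (simp add: lam_def hadamard_at1_def acoeff_diff_const[OF A_closed_analytic_at_0[OF g]]
        right_diff_distrib sums_iff mult.commute if_distrib cong: if_cong)
qed

lemma lam_cmult:
  assumes f: "f \<in> A_space" and g: "g \<in> A_closed"
  shows "lam (\<lambda>z. c * g z) f = c * lam g f"
  using suminf_mult[OF summable_hadamard[OF f g], of c]
  by (simp add: lam_def hadamard_at1_def acoeff_cmult[OF A_closed_analytic_at_0[OF g]]
      mult.left_commute)

lemma zero_in_lam_image_diff_const_iff:
  assumes "S \<subseteq> A0" and "g \<in> A_closed"
  shows "0 \<in> lam (\<lambda>z. g z - w) ` S \<longleftrightarrow> w \<in> lam g ` S"
proof -
  have "lam (\<lambda>z. g z - w) f = lam g f - w" if "f \<in> S" for f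
    using that assms lam_diff_const[of f g w] by (auto simp: A0_def)
  then show ?thesis
    by (auto simp: image_iff)
qed

lemma zero_in_lam_image_cmult_iff:
  assumes "S \<subseteq> A_space" and "g \<in> A_closed" and "c \<noteq> 0"
  shows "0 \<in> lam (\<lambda>z. c * g z) ` S \<longleftrightarrow> 0 \<in> lam g ` S"
  using assms lam_cmult[of _ g c] by (force simp: image_iff)

lemma T_dual_eq: "T_dual S = {g \<in> A0_closed. 0 \<notin> lam g ` S}"
  by (auto simp: T_dual_def lam_def)

lemma lam_images_eq_iff_zero_free:
  assumes "V \<subseteq> U" and "U \<subseteq> A0"
  shows "(\<forall>g\<in>A_closed. lam g ` U = lam g ` V) \<longleftrightarrow>
         (\<forall>g\<in>A_closed. 0 \<notin> lam g ` V \<longrightarrow> 0 \<notin> lam g ` U)"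
proof
  assume zero_free: "\<forall>g\<in>A_closed. 0 \<notin> lam g ` V \<longrightarrow> 0 \<notin> lam g ` U"
  show "\<forall>g\<in>A_closed. lam g ` U = lam g ` V"
  proof (intro ballI subset_antisym subsetI)
    fix g w
    assume g: "g \<in> A_closed" and "w \<in> lam g ` U"
    then have "0 \<in> lam (\<lambda>z. g z - w) ` U"
      using zero_in_lam_image_diff_const_iff[OF assms(2) g] by blast
    then have "0 \<in> lam (\<lambda>z. g z - w) ` V"
      using zero_free A_closed_diff_const[OF g] by blast
    then show "w \<in> lam g ` V"
      using zero_in_lam_image_diff_const_iff[of V g w] assms g by blast
  qed (use assms(1) in blast)
qed blast

lemma zero_free_iff_T_dual_eq:
  assumes "V \<subseteq> U" and "U \<subseteq> A0"
    and "\<forall>g\<in>A_closed. g 0 \<in> lam g ` V"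
  shows "(\<forall>g\<in>A_closed. 0 \<notin> lam g ` V \<longrightarrow> 0 \<notin> lam g ` U) \<longleftrightarrow> T_dual U = T_dual V"
proof
  assume "\<forall>g\<in>A_closed. 0 \<notin> lam g ` V \<longrightarrow> 0 \<notin> lam g ` U"
  then show "T_dual U = T_dual V"
    using assms(1) by (auto simp: T_dual_eq A0_closed_def)
next
  assume dual_eq: "T_dual U = T_dual V"
  show "\<forall>g\<in>A_closed. 0 \<notin> lam g ` V \<longrightarrow> 0 \<notin> lam g ` U"
  proof (intro ballI impI)
    fix g
    assume g: "g \<in> A_closed" and V_free: "0 \<notin> lam g ` V"
    have "g 0 \<noteq> 0"
      using assms(3) g V_free by metis
    define h where "h = (\<lambda>z. inverse (g 0) * g z)"
    have U_space: "U \<subseteq> A_space" and V_space: "V \<subseteq> A_space"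
      using assms(1,2) by (auto simp: A0_def)
    have "h \<in> A0_closed"
      using A_closed_cmult[OF g] \<open>g 0 \<noteq> 0\<close> by (simp add: A0_closed_def h_def)
    moreover have "0 \<notin> lam h ` V"
      using zero_in_lam_image_cmult_iff[OF V_space g] V_free \<open>g 0 \<noteq> 0\<close> by (simp add: h_def)
    ultimately have "h \<in> T_dual V"
      by (simp add: T_dual_eq)
    then have "h \<in> T_dual U"
      using dual_eq by simp
    then have "0 \<notin> lam h ` U"
      by (simp add: T_dual_eq)
    then show "0 \<notin> lam g ` U"
      using zero_in_lam_image_cmult_iff[OF U_space g] \<open>g 0 \<noteq> 0\<close> by (simp add: h_def)
  qed
qed

theorem lemma4:
  fixes U V :: "(complex \<Rightarrow> complex) set"
  assumes "V \<subseteq> U" and "U \<subseteq> A0"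
    and "\<forall>g\<in>A_closed. g 0 \<in> lam g ` V"
  shows "((\<forall>g\<in>A_closed. lam g ` U = lam g ` V) \<longleftrightarrow>
          (\<forall>g\<in>A_closed. 0 \<notin> lam g ` V \<longrightarrow> 0 \<notin> lam g ` U))
       \<and> ((\<forall>g\<in>A_closed. 0 \<notin> lam g ` V \<longrightarrow> 0 \<notin> lam g ` U) \<longleftrightarrow>
          T_dual U = T_dual V)"
  using lam_images_eq_iff_zero_free[OF assms(1,2)] zero_free_iff_T_dual_eq[OF assms]
  by blast

end
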